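(* Let $I\subset\mathbb{R}$ be an open interval, $\lambda\in\mathbb{R}$, and let $x_1,x_2,x_3:I\to\mathbb{R}$ be smooth functions with $x_3(u)\neq0$ and $x_3'(u)\neq 0$ for all $u$, such that the curve $\gamma(u)=(x_1(u),x_2(u),x_3(u),\lambda x_3(u))$ is parametrized by arclength. Let $M$ be the knotted sphere with position vector $$X(u,v)=\big(x_1(u),\,x_2(u),\,x_3(u)(\cos v-\lambda\sin v),\,x_3(u)(\sin v+\lambda\cos v)\big).$$ Then the conjugate surface $\widetilde M$, given by the Laplace transform $X_{-1}=X-\frac{1}{\Gamma_{12}^2}X_u$, lies in the rotation plane $\Pi=\{x\in\mathbb{E}^4: x_3=x_4=0\}$.
   Context: For a surface $X(u,v)$ with first fundamental form $E,F,G$, the Christoffel symbols $\Gamma_{ij}^k$ are defined by the Gauss formula: the tangential part of $X_{uv}$ equals $\Gamma_{12}^1X_u+\Gamma_{12}^2X_v$. The Laplace transform $X_{-1}$ of the surface is $X_{-1}=X-X_u/\Gamma_{12}^2$ (defined where $\Gamma_{12}^2\neq0$); for this surface $\Gamma_{12}^2=x_3'/x_3$. *)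

theory Defs
  imports "HOL-Analysis.Analysis"
begin

definition smooth_on :: "real set \<Rightarrow> (real \<Rightarrow> real) \<Rightarrow> bool" where
  "smooth_on I f \<longleftrightarrow> (\<forall>n. \<forall>u\<in>I. ((deriv ^^ n) f) differentiable (at u))"

definition X_u :: "(real \<Rightarrow> real \<Rightarrow> real^4) \<Rightarrow> real \<Rightarrow> real \<Rightarrow> real^4" where
  "X_u X u v = vector_derivative (\<lambda>t. X t v) (at u)"

definition X_v :: "(real \<Rightarrow> real \<Rightarrow> real^4) \<Rightarrow> real \<Rightarrow> real \<Rightarrow> real^4" where
  "X_v X u v = vector_derivative (\<lambda>t. X u t) (at v)"

definition X_uv :: "(real \<Rightarrow> real \<Rightarrow> real^4) \<Rightarrow> real \<Rightarrow> real \<Rightarrow> real^4" where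
  "X_uv X u v = vector_derivative (\<lambda>t. X_u X u t) (at v)"

definition fff_E :: "(real \<Rightarrow> real \<Rightarrow> real^4) \<Rightarrow> real \<Rightarrow> real \<Rightarrow> real" where
  "fff_E X u v = X_u X u v \<bullet> X_u X u v"
definition fff_F :: "(real \<Rightarrow> real \<Rightarrow> real^4) \<Rightarrow> real \<Rightarrow> real \<Rightarrow> real" where
  "fff_F X u v = X_u X u v \<bullet> X_v X u v"
definition fff_G :: "(real \<Rightarrow> real \<Rightarrow> real^4) \<Rightarrow> real \<Rightarrow> real \<Rightarrow> real" where
  "fff_G X u v = X_v X u v \<bullet> X_v X u v"

text \<open>Christoffel symbol Gamma_12^2 from the Gauss formula: the tangential part of X_uv is
  Gamma_12^1 X_u + Gamma_12^2 X_v; taking inner products with X_u, X_v gives the linear system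
  X_uv.X_u = G1 E + G2 F, X_uv.X_v = G1 F + G2 G, whose solution for G2 (Cramer) is below.\<close>
definition christoffel_12_2 :: "(real \<Rightarrow> real \<Rightarrow> real^4) \<Rightarrow> real \<Rightarrow> real \<Rightarrow> real" where
  "christoffel_12_2 X u v =
     (fff_E X u v * (X_uv X u v \<bullet> X_v X u v) - fff_F X u v * (X_uv X u v \<bullet> X_u X u v))
     / (fff_E X u v * fff_G X u v - (fff_F X u v)\<^sup>2)"

definition laplace_minus :: "(real \<Rightarrow> real \<Rightarrow> real^4) \<Rightarrow> real \<Rightarrow> real \<Rightarrow> real^4" where
  "laplace_minus X u v = X u v - (1 / christoffel_12_2 X u v) *\<^sub>R X_u X u v"

end

theory Submission
  imports Defs
begin

text \<open>The knotted sphere is the orbit of the profile curve \<open>(a, b, c)\<close> under a rotation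
  in the \<open>x\<^sub>3x\<^sub>4\<close>-plane, so its coordinate lines are orthogonal (\<open>F = 0\<close>) and
  \<open>X\<^sub>u\<^sub>v\<close> is \<open>c'/c\<close> times \<open>X\<^sub>v\<close>. Hence \<open>\<Gamma>\<^sub>1\<^sub>2\<^sup>2 = c'/c\<close>, and in the last two
  coordinates the Laplace transform subtracts from \<open>c\<close> the quantity \<open>(c/c') c'\<close>, leaving
  \<open>0\<close>.\<close>

lemma vector4_nth [simp]:
  "(vector [x, y, z, w] :: ('a::zero)^4) $ 1 = x"
  "(vector [x, y, z, w] :: ('a::zero)^4) $ 2 = y"
  "(vector [x, y, z, w] :: ('a::zero)^4) $ 3 = z"
  "(vector [x, y, z, w] :: ('a::zero)^4) $ 4 = w"
  unfolding vector_def by simp_all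

lemma inner_vector4:
  "(vector [a, b, c, d] :: real^4) \<bullet> vector [a', b', c', d'] = a * a' + b * b' + c * c' + d * d'"
  by (simp add: inner_vec_def sum_4)

lemma has_vector_derivative_vector4:
  assumes "(a has_real_derivative a') (at u)" "(b has_real_derivative b') (at u)"
    and "(c has_real_derivative c') (at u)" "(d has_real_derivative d') (at u)"
  shows "((\<lambda>t. vector [a t, b t, c t, d t] :: real^4) has_vector_derivative
           vector [a', b', c', d']) (at u)"
proof -
  let ?e1 = "vector [1, 0, 0, 0] :: real^4" and ?e2 = "vector [0, 1, 0, 0] :: real^4"
  let ?e3 = "vector [0, 0, 1, 0] :: real^4" and ?e4 = "vector [0, 0, 0, 1] :: real^4"
  have split: "vector [p, q, r, s] = p *\<^sub>R ?e1 + q *\<^sub>R ?e2 + r *\<^sub>R ?e3 + s *\<^sub>R ?e4"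
    for p q r s :: real
    by (simp add: vec_eq_iff forall_4)
  have curve: "(\<lambda>t. vector [a t, b t, c t, d t]) =
        (\<lambda>t. a t *\<^sub>R ?e1 + b t *\<^sub>R ?e2 + c t *\<^sub>R ?e3 + d t *\<^sub>R ?e4)"
    by (intro ext split)
  show ?thesis
    unfolding curve split[of a']
    by (intro has_vector_derivative_add
        bounded_linear.has_vector_derivative[OF bounded_linear_scaleR_left]
        assms[unfolded has_real_derivative_iff_has_vector_derivative])
qed

definition rotation_surface :: "real \<Rightarrow> (real \<Rightarrow> real) \<Rightarrow> (real \<Rightarrow> real) \<Rightarrow> (real \<Rightarrow> real)
    \<Rightarrow> real \<Rightarrow> real \<Rightarrow> real^4" where
  "rotation_surface lam a b c = (\<lambda>u v. vector [a u, b u, c u * (cos v - lam * sin v),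
                                               c u * (sin v + lam * cos v)])"

context
  fixes lam :: real and a b c :: "real \<Rightarrow> real" and u a' b' c' :: real
  assumes a': "(a has_real_derivative a') (at u)"
    and b': "(b has_real_derivative b') (at u)"
    and c': "(c has_real_derivative c') (at u)"
begin

private abbreviation "X \<equiv> rotation_surface lam a b c"

lemma rotation_surface_X_u:
  "X_u X u v = vector [a', b', c' * (cos v - lam * sin v), c' * (sin v + lam * cos v)]"
  unfolding X_u_def rotation_surface_def
  by (rule vector_derivative_at, rule has_vector_derivative_vector4[OF a' b'])
     (auto intro!: derivative_eq_intros c')

lemma rotation_surface_X_v:
  "X_v X u v = vector [0, 0, - c u * (sin v + lam * cos v), c u * (cos v - lam * sin v)]"
  unfolding X_v_def rotation_surface_def
  by (rule vector_derivative_at, rule has_vector_derivative_vector4)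
     (auto intro!: derivative_eq_intros simp: algebra_simps)

lemma rotation_surface_X_uv:
  "X_uv X u v = vector [0, 0, - c' * (sin v + lam * cos v), c' * (cos v - lam * sin v)]"
  unfolding X_uv_def rotation_surface_X_u
  by (rule vector_derivative_at, rule has_vector_derivative_vector4)
     (auto intro!: derivative_eq_intros simp: algebra_simps)

lemma rotation_surface_fff:
  "fff_E X u v = a'\<^sup>2 + b'\<^sup>2 + (1 + lam\<^sup>2) * c'\<^sup>2"
  "fff_F X u v = 0"
  "fff_G X u v = (1 + lam\<^sup>2) * (c u)\<^sup>2"
  "X_uv X u v \<bullet> X_v X u v = (1 + lam\<^sup>2) * c u * c'"
proof -
  have "fff_E X u v = a'\<^sup>2 + b'\<^sup>2 + (1 + lam\<^sup>2) * c'\<^sup>2 * ((sin v)\<^sup>2 + (cos v)\<^sup>2)"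
    unfolding fff_E_def rotation_surface_X_u inner_vector4 by algebra
  then show "fff_E X u v = a'\<^sup>2 + b'\<^sup>2 + (1 + lam\<^sup>2) * c'\<^sup>2" by simp
  show "fff_F X u v = 0"
    unfolding fff_F_def rotation_surface_X_u rotation_surface_X_v inner_vector4 by algebra
  have "fff_G X u v = (1 + lam\<^sup>2) * (c u)\<^sup>2 * ((sin v)\<^sup>2 + (cos v)\<^sup>2)"
    unfolding fff_G_def rotation_surface_X_v inner_vector4 by algebra
  then show "fff_G X u v = (1 + lam\<^sup>2) * (c u)\<^sup>2" by simp
  have "X_uv X u v \<bullet> X_v X u v = (1 + lam\<^sup>2) * c u * c' * ((sin v)\<^sup>2 + (cos v)\<^sup>2)"
    unfolding rotation_surface_X_uv rotation_surface_X_v inner_vector4 by algebra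
  then show "X_uv X u v \<bullet> X_v X u v = (1 + lam\<^sup>2) * c u * c'" by simp
qed

lemma rotation_surface_christoffel_12_2:
  assumes "c u \<noteq> 0" "c' \<noteq> 0"
  shows "christoffel_12_2 X u v = c' / c u"
proof -
  define k where "k = 1 + lam\<^sup>2"
  define E where "E = a'\<^sup>2 + b'\<^sup>2 + k * c'\<^sup>2"
  have "k > 0" unfolding k_def by (simp add: add_pos_nonneg)
  then have "E > 0" unfolding E_def using assms(2) by (simp add: add_nonneg_pos)
  have "christoffel_12_2 X u v = (E * k * c u) * c' / ((E * k * c u) * c u)"
    unfolding christoffel_12_2_def rotation_surface_fff E_def k_def
    by (simp add: power2_eq_square mult_ac)
  also have "\<dots> = c' / c u"
    using \<open>k > 0\<close> \<open>E > 0\<close> assms(1) by simp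
  finally show ?thesis .
qed

lemma rotation_surface_laplace_minus_in_plane:
  assumes "c u \<noteq> 0" "c' \<noteq> 0"
  shows "laplace_minus X u v $ 3 = 0" "laplace_minus X u v $ 4 = 0"
  unfolding laplace_minus_def rotation_surface_christoffel_12_2[OF assms] rotation_surface_X_u
  using assms by (simp_all add: rotation_surface_def)

end

lemma smooth_on_has_real_derivative:
  assumes "smooth_on I f" "u \<in> I"
  shows "(f has_real_derivative deriv f u) (at u)"
  using assms unfolding smooth_on_def
  by (metis funpow_0 DERIV_deriv_iff_real_differentiable)

theorem proposition9:
  fixes I :: "real set" and lam :: real and x1 x2 x3 :: "real \<Rightarrow> real"
  assumes I: "open I" "is_interval I" "I \<noteq> {}"
    and smooth: "smooth_on I x1" "smooth_on I x2" "smooth_on I x3"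
    and nz: "\<forall>u\<in>I. x3 u \<noteq> 0" and dnz: "\<forall>u\<in>I. deriv x3 u \<noteq> 0"
    and arclength: "\<forall>u\<in>I. norm (vector_derivative
                      (\<lambda>t. vector [x1 t, x2 t, x3 t, lam * x3 t] :: real^4) (at u)) = 1"
  shows "\<forall>u\<in>I. \<forall>v.
     (let X = (\<lambda>u v. vector [x1 u, x2 u, x3 u * (cos v - lam * sin v),
                               x3 u * (sin v + lam * cos v)] :: real^4)
      in christoffel_12_2 X u v \<noteq> 0 \<and>
         laplace_minus X u v $ 3 = 0 \<and> laplace_minus X u v $ 4 = 0)"
proof (intro ballI allI)
  fix u v assume u: "u \<in> I"
  note derivs = smooth[THEN smooth_on_has_real_derivative, OF u]
  have ne: "x3 u \<noteq> 0" "deriv x3 u \<noteq> 0" using nz dnz u by auto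
  show "let X = (\<lambda>u v. vector [x1 u, x2 u, x3 u * (cos v - lam * sin v),
                               x3 u * (sin v + lam * cos v)] :: real^4)
      in christoffel_12_2 X u v \<noteq> 0 \<and>
         laplace_minus X u v $ 3 = 0 \<and> laplace_minus X u v $ 4 = 0"
    using rotation_surface_christoffel_12_2[OF derivs ne, of lam v]
      rotation_surface_laplace_minus_in_plane[OF derivs ne, of lam v] ne
    by (simp add: rotation_surface_def Let_def)
qed

end
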